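(* Let $n\ge 2$ and $1\le i\le n-1$. Then $S_i(n)(c_1,\dots,c_{n-1})$, as a polynomial in indeterminates $c_1,\dots,c_{n-1}$, involves only $c_1,\dots,c_{n-i}$, has total degree at most $\min\{[\frac{2(n-i)+1}{3}],[\frac{n+1}{2}]\}$, and has the form \[\tilde F(c_1,\dots,c_{n-i-1})+\frac{(-1)^i}{2^i\,i!}\,c_{n-i}\] for some polynomial $\tilde F$ (depending on $n$ and $i$) with rational coefficients.
   Context: Let $a_0,a_1,\dots$ be indeterminates and $a(x)=\sum_{i\ge0}a_ix^i$. For a positive integer $j$ set $G(x)=\prod_{i=0}^{j-1}\frac{1+a(x)x^2}{1+ix}$, $H(x)=\prod_{i=1-j}^{-1}\frac{1+ix}{1+a(x)x^2}$, $u=2j-1$, $v=j(j-1)$. For each $n\ge1$ there are unique polynomials $S_0(n),\dots,S_n(n)\in\mathbb{Q}[a_0,\dots,a_{n-2}]$, independent of $j$, such that for every positive integer $j$ the coefficient of $x^{n-1}$ in $\frac{G(x)-H(x)}{x^2}(1+a(x)x^2)$ equals $u\big(a_{n-1}+S_0(n)+\sum_{i=1}^nS_i(n)v^i\big)$. $S_i(n)(c_1,\dots,c_{n-1})$ denotes the result of substituting $a_k=c_{k+1}$ for $0\le k\le n-2$. $[x]$ is the integer part of $x$. *)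

theory Defs
  imports Complex_Main "HOL-Library.Poly_Mapping" "HOL-Computational_Algebra.Formal_Power_Series"
begin

text \<open>Multivariate polynomials over the rationals in the indeterminates a_0, a_1, ...
  (variable a_k has index k): finitely supported maps from monomials to coefficients.\<close>
type_synonym mpoly = "(nat \<Rightarrow>\<^sub>0 nat) \<Rightarrow>\<^sub>0 rat"

definition mvar :: "nat \<Rightarrow> mpoly" where
  "mvar k = Poly_Mapping.single (Poly_Mapping.single k 1) 1"

definition mconst :: "rat \<Rightarrow> mpoly" where
  "mconst c = Poly_Mapping.single 0 c"

definition mvars :: "mpoly \<Rightarrow> nat set" where
  "mvars p = (\<Union>m\<in>Poly_Mapping.keys p. Poly_Mapping.keys m)"

definition tdeg :: "mpoly \<Rightarrow> nat" where
  "tdeg p = Max (insert 0 ((\<lambda>m. sum (Poly_Mapping.lookup m) (Poly_Mapping.keys m)) ` Poly_Mapping.keys p))"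

definition fps_inv1 :: "mpoly fps \<Rightarrow> mpoly fps" where
  "fps_inv1 f = (THE g. f * g = 1)"

definition aser :: "mpoly fps" where
  "aser = Abs_fps (\<lambda>i. mvar i)"

definition Gser :: "nat \<Rightarrow> mpoly fps" where
  "Gser j = (\<Prod>i\<in>{0..<j}. (1 + aser * fps_X ^ 2) * fps_inv1 (1 + of_nat i * fps_X))"

definition Hser :: "nat \<Rightarrow> mpoly fps" where
  "Hser j = (\<Prod>i\<in>{1 - int j .. -1}. (1 + of_int i * fps_X) * fps_inv1 (1 + aser * fps_X ^ 2))"

definition coeffGH :: "nat \<Rightarrow> nat \<Rightarrow> mpoly" where
  "coeffGH n j = fps_nth (fps_shift 2 (Gser j - Hser j) * (1 + aser * fps_X ^ 2)) (n - 1)"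

definition is_S :: "nat \<Rightarrow> (nat \<Rightarrow> mpoly) \<Rightarrow> bool" where
  "is_S n S \<longleftrightarrow>
     (\<forall>i. mvars (S i) \<subseteq> {..<n - 1}) \<and> (\<forall>i>n. S i = 0) \<and>
     (\<forall>j::nat. j \<ge> 1 \<longrightarrow>
        coeffGH n j = of_int (2 * int j - 1) *
          (mvar (n - 1) + S 0 + (\<Sum>i=1..n. S i * of_int (int j * (int j - 1)) ^ i)))"

end

theory Submission
  imports Defs "HOL-Computational_Algebra.Polynomial"
begin

text \<open>
  Write j = k + 1. By induction on s, using the recurrences
  G_{k+2} (1 + (k+1) x) = G_{k+1} (1 + a x^2) and H_{k+2} (1 + a x^2) = H_{k+1} (1 - (k+1) x),
  the coefficient of x^s in G_{k+1} (and in H_{k+1}) is a polynomial in k over Q[a], in which a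
  monomial a^m of weight W = \<Sum> l m_l and degree D = \<Sum> m_l occurs only if W + 2D \<le> s, and
  then only with powers k^d, d \<le> 2s - 2W - 3D. Hence the coefficient of a^m in coeffGH n (k+1)
  is a rational polynomial in k of degree at most 2(n+1) - 2W - 3D, with W + 2D \<le> n + 1. By the
  defining identity of the S_i it also equals (2k+1) C(k^2+k), where C collects the coefficients
  of a^m in the S_i, so its degree is at least 2i + 1 whenever a^m occurs in S_i. The resulting
  inequality 2i + 1 \<le> 2(n+1) - 2W - 3D bounds the variables and the degree of S_i, and leaves
  a_{n-i-1} as the only monomial of S_i containing a_{n-i-1}. For it the bound is attained, and
  its coefficient comes from the top coefficients of the polynomials in k, which by the
  recurrences satisfy 2(r+1) c_{r+1} = - c_r, so c_r = (-1/2)^r / r!.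
\<close>

unbundle fps_syntax

abbreviation "keys \<equiv> Poly_Mapping.keys"

abbreviation "lookup \<equiv> Poly_Mapping.lookup"

abbreviation "single \<equiv> Poly_Mapping.single"

lemma poly_eqI_of_nat:
  fixes p q :: "'a::{idom, ring_char_0} poly"
  assumes "\<And>j. poly p (of_nat j) = poly q (of_nat j)"
  shows "p = q"
proof (rule ccontr)
  assume "p \<noteq> q"
  then have "finite {x. poly (p - q) x = 0}" by (intro poly_roots_finite) simp
  moreover have "range (of_nat :: nat \<Rightarrow> 'a) \<subseteq> {x. poly (p - q) x = 0}" using assms by auto
  ultimately show False
    using infinite_UNIV_char_0 finite_subset range_inj_infinite[OF inj_of_nat] by blast
qed

lemma degree_pcompose_linear: "degree (pcompose Q [:c, 1:]) = degree (Q::'a::idom poly)"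
  by (simp add: degree_pcompose)

lemma coeff_pcompose_linear_top:
  fixes Q :: "'a::idom poly"
  assumes "degree Q \<le> D"
  shows "coeff (pcompose Q [:c, 1:]) D = coeff Q D"
proof (cases "degree Q = D")
  case True
  then show ?thesis using lead_coeff_comp[of "[:c, 1:]" Q] degree_pcompose_linear[of Q c] by simp
next
  case False
  then show ?thesis using assms degree_pcompose_linear[of Q c] by (simp add: coeff_eq_0)
qed

lemma coeff_pcompose_shift_diff:
  fixes Q :: "'a::comm_ring_1 poly"
  assumes "degree Q \<le> D" "0 < D"
  shows "coeff (pcompose Q [:1, 1:] - Q) (D - 1) = of_nat D * coeff Q D"
proof -
  have "pcompose (monom c i) q = smult c (q ^ i)" for c :: 'a and i and q
    by (induction i) (simp_all add: monom_Suc pcompose_pCons monom_0)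
  then have "pcompose Q [:1, 1:] = (\<Sum>i\<le>D. smult (coeff Q i) ([:1, 1:] ^ i))"
    by (subst poly_as_sum_of_monoms'[OF assms(1), symmetric]) (simp add: pcompose_sum)
  moreover have "coeff ([:1, 1:] ^ i) (D - 1) = (of_nat (i choose (D - 1)) :: 'a)" for i
    using coeff_linear_poly_power[of "D - 1" i "1::'a" 1]
    by (cases "D - 1 \<le> i") (simp_all add: binomial_eq_0 coeff_eq_0 degree_linear_power)
  ultimately have "coeff (pcompose Q [:1, 1:]) (D - 1) = (\<Sum>i\<le>D. coeff Q i * of_nat (i choose (D - 1)))"
    by (simp add: coeff_sum)
  also have "\<dots> = (\<Sum>i\<in>{D - 1, D}. coeff Q i * of_nat (i choose (D - 1)))"
  proof (rule sum.mono_neutral_right)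
    show "\<forall>i\<in>{..D} - {D - 1, D}. coeff Q i * of_nat (i choose (D - 1)) = 0"
    proof
      fix i assume "i \<in> {..D} - {D - 1, D}"
      then have "i < D - 1" by auto
      then show "coeff Q i * of_nat (i choose (D - 1)) = 0" by (simp add: binomial_eq_0)
    qed
  qed auto
  also have "\<dots> = coeff Q (D - 1) + coeff Q D * of_nat D"
  proof -
    have "D - 1 \<noteq> D" using assms(2) by simp
    moreover have "D choose (D - 1) = D" using assms(2) by (subst binomial_symmetric) auto
    ultimately show ?thesis by simp
  qed
  finally show ?thesis by (simp add: mult.commute)
qed

lemma coeff_linear_mult_Suc:
  "coeff ([:1, 1:] * Q) (Suc d) = coeff Q (Suc d) + coeff (Q::'a::comm_semiring_1 poly) d"
  by simp

lemma binomial_plus_one: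
  "((x::'a::comm_semiring_1) + 1) ^ Suc d =
     x ^ Suc d + of_nat (Suc d) * x ^ d + (\<Sum>k<d. of_nat (Suc d choose k) * x ^ k)"
proof -
  have "(x + 1) ^ Suc d = (\<Sum>k\<le>Suc d. of_nat (Suc d choose k) * x ^ k)"
    using binomial_ring[of x 1 "Suc d"] by simp
  also have "\<dots> = x ^ Suc d + of_nat (Suc d choose d) * x ^ d + (\<Sum>k<d. of_nat (Suc d choose k) * x ^ k)"
    by (simp add: sum.atMost_Suc lessThan_Suc_atMost[symmetric] sum.lessThan_Suc ac_simps)
  also have "Suc d choose d = Suc d" by (subst binomial_symmetric) auto
  finally show ?thesis by simp
qed

lemma exists_antidifference_power:
  "\<exists>A::'a::field_char_0 poly.
     degree A \<le> Suc d \<and> poly A 0 = 0 \<and> (\<forall>x. poly A (x + 1) - poly A x = x ^ d)"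
proof (induction d rule: less_induct)
  case (less d)
  then have "\<forall>k\<in>{..<d}. \<exists>A::'a poly. degree A \<le> Suc k \<and> poly A 0 = 0 \<and>
      (\<forall>x. poly A (x + 1) - poly A x = x ^ k)"
    by blast
  from bchoice[OF this] obtain F :: "nat \<Rightarrow> 'a poly" where "\<forall>k\<in>{..<d}. degree (F k) \<le> Suc k \<and>
      poly (F k) 0 = 0 \<and> (\<forall>x. poly (F k) (x + 1) - poly (F k) x = x ^ k)"
    by blast
  then have F: "\<And>k. k < d \<Longrightarrow> degree (F k) \<le> Suc k \<and>
      poly (F k) 0 = 0 \<and> (\<forall>x. poly (F k) (x + 1) - poly (F k) x = x ^ k)"
    by simp
  \<comment> \<open>(x + 1)^(d+1) - x^(d+1) is (d + 1) x^d plus lower powers with known antidifferences\<close>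
  define A where
    "A = smult (1 / of_nat (Suc d)) (monom 1 (Suc d) - (\<Sum>k<d. smult (of_nat (Suc d choose k)) (F k)))"
  have "degree A \<le> Suc d"
  proof -
    have "degree (\<Sum>k<d. smult (of_nat (Suc d choose k)) (F k)) \<le> Suc d"
    proof (rule degree_sum_le)
      fix k assume "k \<in> {..<d}"
      then show "degree (smult (of_nat (Suc d choose k)) (F k)) \<le> Suc d"
        using F[of k] degree_smult_le[of _ "F k"]
        by (meson le_trans lessThan_iff less_imp_le_nat not_less_eq_eq)
    qed simp
    moreover have "degree (monom (1::'a) (Suc d)) \<le> Suc d" by (simp add: degree_monom_le)
    ultimately show ?thesis unfolding A_def
      by (meson degree_diff_le degree_smult_le le_trans)
  qed
  moreover have "poly A 0 = 0"
    unfolding A_def using F by (simp add: poly_sum poly_monom)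
  moreover have "poly A (x + 1) - poly A x = x ^ d" for x
  proof -
    let ?B = "\<lambda>y. \<Sum>k<d. of_nat (Suc d choose k) * poly (F k) y"
    have s: "?B (x + 1) - ?B x = (\<Sum>k<d. of_nat (Suc d choose k) * x ^ k)"
      by (simp add: sum_subtractf[symmetric] right_diff_distrib[symmetric] F)
    have "poly A (x + 1) - poly A x =
        1 / of_nat (Suc d) * (((x + 1) ^ Suc d - x ^ Suc d) - (?B (x + 1) - ?B x))"
      unfolding A_def by (simp add: poly_sum poly_monom algebra_simps)
    also have "\<dots> = 1 / of_nat (Suc d) * (of_nat (Suc d) * x ^ d)"
      unfolding s binomial_plus_one by simp
    also have "\<dots> = x ^ d" using of_nat_neq_0[of d, where ?'a = 'a] by (simp del: of_nat_Suc)
    finally show ?thesis .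
  qed
  ultimately show ?case by blast
qed

text \<open>With j = k + 1 we have u = 2j - 1 = 1 + 2k and v = j(j - 1) = k + k^2.\<close>

definition uv_poly :: "'a::comm_ring_1 poly \<Rightarrow> 'a poly" where
  "uv_poly C = [:1, 2:] * pcompose C [:0, 1, 1:]"

lemma poly_uv_poly: "poly (uv_poly C) x = (1 + 2 * x) * poly C (x + x ^ 2)"
  by (simp add: uv_poly_def poly_pcompose algebra_simps power2_eq_square)

lemma degree_uv_poly:
  fixes C :: "'a::{idom, ring_char_0} poly"
  assumes "C \<noteq> 0"
  shows "degree (uv_poly C) = 2 * degree C + 1" and "lead_coeff (uv_poly C) = 2 * lead_coeff C"
proof -
  have "lead_coeff (pcompose C [:0, 1, 1:]) = lead_coeff C"
    by (subst lead_coeff_comp) simp_all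
  then have "pcompose C [:0, 1, 1:] \<noteq> 0" using assms by auto
  moreover have "degree (pcompose C [:0, 1, 1:]) = degree C * 2" by (simp add: degree_pcompose)
  ultimately show "degree (uv_poly C) = 2 * degree C + 1"
    unfolding uv_poly_def by (subst degree_mult_eq) auto
  show "lead_coeff (uv_poly C) = 2 * lead_coeff C"
    unfolding uv_poly_def lead_coeff_mult \<open>lead_coeff (pcompose C [:0, 1, 1:]) = lead_coeff C\<close> by simp
qed

lemma degree_uv_poly_ge:
  fixes C :: "'a::{idom, ring_char_0} poly"
  assumes "coeff C i \<noteq> 0"
  shows "2 * i + 1 \<le> degree (uv_poly C)"
proof -
  have "C \<noteq> 0" and "i \<le> degree C" using assms by (auto intro: le_degree)
  then show ?thesis using degree_uv_poly(1)[OF \<open>C \<noteq> 0\<close>] by simp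
qed

lemma coeff_uv_poly_top:
  fixes C :: "'a::{idom, ring_char_0} poly"
  assumes "degree (uv_poly C) \<le> 2 * i + 1"
  shows "coeff (uv_poly C) (2 * i + 1) = 2 * coeff C i"
proof (cases "coeff C i = 0")
  case True
  show ?thesis
  proof (cases "C = 0")
    case False
    then have "degree C \<noteq> i" using True by auto
    moreover have "degree C \<le> i" using assms degree_uv_poly(1)[OF False] by simp
    ultimately have "degree (uv_poly C) < 2 * i + 1" using degree_uv_poly(1)[OF False] by simp
    then show ?thesis using True by (simp add: coeff_eq_0)
  qed (simp add: uv_poly_def)
next
  case False
  then have "C \<noteq> 0" and "i \<le> degree C" by (auto intro: le_degree)
  then have "degree C = i" and "degree (uv_poly C) = 2 * i + 1"
    using assms degree_uv_poly(1)[OF \<open>C \<noteq> 0\<close>] by simp_all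
  then show ?thesis using degree_uv_poly(2)[OF \<open>C \<noteq> 0\<close>] by simp
qed

definition var_monomial :: "'k \<Rightarrow> 'k \<Rightarrow>\<^sub>0 nat" where
  "var_monomial t = single t 1"

lemma var_monomial_neq_zero [simp]: "var_monomial t \<noteq> 0"
  by (metis var_monomial_def lookup_single_eq lookup_zero one_neq_zero)

lemma var_monomial_eq_iff [simp]: "var_monomial k = var_monomial t \<longleftrightarrow> k = t"
  by (metis var_monomial_def lookup_single_eq lookup_single_not_eq one_neq_zero)

lemma lookup_mvar: "lookup (mvar k) m = (if m = var_monomial k then 1 else 0)"
  by (simp add: mvar_def var_monomial_def lookup_single when_def)

lemma keys_mvar [simp]: "keys (mvar k) = {var_monomial k}"
  by (simp add: mvar_def var_monomial_def)

lemma lookup_mvar_zero [simp]: "lookup (mvar k) 0 = 0"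
  by (simp add: lookup_mvar)

lemma lookup_mvar_var_monomial: "lookup (mvar k) (var_monomial t) = (if k = t then 1 else 0)"
  by (auto simp: lookup_mvar)

lemma sum_lookup_mvar_var_monomial:
  "(\<Sum>i<s - 1. smult (lookup (mvar (s - 2 - i)) (var_monomial t)) (f i)) =
     (if t + 2 \<le> s then f (s - 2 - t) else (0::rat poly))"
proof (cases "t + 2 \<le> s")
  case True
  have "(\<Sum>i<s - 1. smult (lookup (mvar (s - 2 - i)) (var_monomial t)) (f i)) =
      (\<Sum>i<s - 1. if i = s - 2 - t then f i else 0)"
    using True by (intro sum.cong) (auto simp: lookup_mvar_var_monomial)
  also have "\<dots> = f (s - 2 - t)" using True by simp
  finally show ?thesis using True by simp
next
  case False
  then show ?thesis by (auto simp: lookup_mvar_var_monomial intro!: sum.neutral)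
qed

lemma plus_eq_zero_monomial_iff:
  "(a::'k \<Rightarrow>\<^sub>0 nat) + b = 0 \<longleftrightarrow> a = 0 \<and> b = 0"
  by (metis add_cancel_right_left add_eq_0_iff_both_eq_0 lookup_add poly_mapping_eqI lookup_zero)

lemma plus_eq_var_monomial_iff:
  "(a::'k \<Rightarrow>\<^sub>0 nat) + b = var_monomial t \<longleftrightarrow>
     (a = 0 \<and> b = var_monomial t) \<or> (a = var_monomial t \<and> b = 0)"
proof
  assume sum: "a + b = var_monomial t"
  have pointwise: "lookup a l + lookup b l = (if l = t then 1 else 0)" for l
    using arg_cong[OF sum, of "\<lambda>p. lookup p l"]
    by (simp add: var_monomial_def lookup_add lookup_single when_def)
  have zero_off_t: "lookup c t = 0 \<Longrightarrow> c = 0" if "c = a \<or> c = b" for c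
    using that pointwise by (intro poly_mapping_eqI) (metis add_is_0 lookup_zero)
  have "lookup a t = 0 \<or> lookup b t = 0" using pointwise[of t] by auto
  then show "(a = 0 \<and> b = var_monomial t) \<or> (a = var_monomial t \<and> b = 0)"
    by (metis zero_off_t sum add_0 add_0_right)
qed auto

lemma lookup_mult_zero:
  fixes p q :: "('k \<Rightarrow>\<^sub>0 nat) \<Rightarrow>\<^sub>0 'a::comm_semiring_1"
  shows "lookup (p * q) 0 = lookup p 0 * lookup q 0"
proof -
  have "(\<Sum>q'. lookup q q' when 0 = l + q') = (lookup q 0 when l = 0)" for l
    by (simp add: plus_eq_zero_monomial_iff Sum_any_when_independent flip: when_when conj_commute)
  then show ?thesis
    by (simp add: lookup_mult mult_when)
qed

lemma lookup_mult_var_monomial: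
  fixes p q :: "('k \<Rightarrow>\<^sub>0 nat) \<Rightarrow>\<^sub>0 'a::comm_semiring_1"
  shows "lookup (p * q) (var_monomial t) =
    lookup p 0 * lookup q (var_monomial t) + lookup p (var_monomial t) * lookup q 0"
proof -
  let ?e = "var_monomial t"
  have "(\<Sum>q'. lookup q q' when ?e = l + q') = (lookup q ?e when l = 0) + (lookup q 0 when l = ?e)"
    for l
  proof (cases "l = 0")
    case True
    then show ?thesis by (simp add: eq_commute[of ?e])
  next
    case False
    then have "(?e = l + q') \<longleftrightarrow> (q' = 0 \<and> l = ?e)" for q'
      by (metis plus_eq_var_monomial_iff)
    then show ?thesis
      using False by (simp add: Sum_any_when_independent flip: when_when)
  qed
  then have "lookup (p * q) ?e =
      (\<Sum>l. (lookup p l * lookup q ?e when l = 0) + (lookup p l * lookup q 0 when l = ?e))"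
    by (simp add: lookup_mult distrib_left mult_when)
  also have "\<dots> = lookup p 0 * lookup q ?e + lookup p ?e * lookup q 0"
    by (subst Sum_any.distrib) (auto simp: when_def)
  finally show ?thesis .
qed

lemma lookup_mult_const:
  fixes p :: "('k \<Rightarrow>\<^sub>0 nat) \<Rightarrow>\<^sub>0 'a::comm_semiring_1"
  shows "lookup (p * single 0 r) m = lookup p m * r"
proof -
  have "p * single 0 r = Poly_Mapping.map ((*) r) p"
    by (simp add: mult.commute[of p] mult_map_scale_conv_mult)
  then show ?thesis by (simp add: map.rep_eq when_def mult.commute)
qed

lemma lookup_of_int_mult: "lookup (of_int z * (p::mpoly)) m = of_int z * lookup p m"
  using lookup_mult_const[of p "of_int z" m] by (simp add: mult.commute)

lemma lookup_mult_of_int: "lookup ((p::mpoly) * of_int z) m = lookup p m * of_int z"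
  using lookup_mult_const[of p "of_int z" m] by simp

lemma lookup_of_nat_mult: "lookup (of_nat z * (p::mpoly)) m = of_nat z * lookup p m"
  using lookup_of_int_mult[of "int z"] by simp

lemma mconst_add: "mconst (a + b) = mconst a + mconst b"
  and mconst_mult: "mconst (a * b) = mconst a * mconst b"
  and mconst_diff: "mconst (a - b) = mconst a - mconst b"
  and mconst_of_nat: "mconst (of_nat j) = of_nat j"
  and mconst_zero [simp]: "mconst 0 = 0"
  by (simp_all add: mconst_def single_add mult_single single_diff)

lemma keys_diff_single_lookup:
  "keys (p - single k (lookup p k)) = keys p - {k}" for p :: "'k \<Rightarrow>\<^sub>0 'a::ab_group_add"
  by (auto simp: in_keys_iff lookup_minus lookup_single when_def split: if_splits)

definition mdeg :: "('k \<Rightarrow>\<^sub>0 nat) \<Rightarrow> nat" where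
  "mdeg m = (\<Sum>l\<in>keys m. lookup m l)"

definition mweight :: "(nat \<Rightarrow>\<^sub>0 nat) \<Rightarrow> nat" where
  "mweight m = (\<Sum>l\<in>keys m. l * lookup m l)"

lemma mdeg_add: "mdeg (a + b) = mdeg a + mdeg b"
  unfolding mdeg_def by (rule setsum_keys_plus_distrib) auto

lemma mweight_add: "mweight (a + b) = mweight a + mweight b"
  unfolding mweight_def by (rule setsum_keys_plus_distrib) (auto simp: distrib_left)

lemma mdeg_zero [simp]: "mdeg 0 = 0" and mweight_zero [simp]: "mweight 0 = 0"
  by (simp_all add: mdeg_def mweight_def)

lemma mdeg_var_monomial [simp]: "mdeg (var_monomial t) = 1"
  and mweight_var_monomial [simp]: "mweight (var_monomial t) = t"
  by (simp_all add: mdeg_def mweight_def var_monomial_def)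

lemma in_keys_le_mweight: "l \<in> keys m \<Longrightarrow> l \<le> mweight m"
proof -
  assume l: "l \<in> keys m"
  then have "l * lookup m l \<le> mweight m" unfolding mweight_def by (intro member_le_sum) auto
  moreover have "l \<le> l * lookup m l" using l by (simp add: in_keys_iff)
  ultimately show ?thesis by linarith
qed

lemma in_keys_lookup_le_mdeg: "l \<in> keys m \<Longrightarrow> lookup m l \<le> mdeg m"
  unfolding mdeg_def by (intro member_le_sum) auto

lemma mdeg_le_one_eq_var_monomial:
  assumes "t \<in> keys m" "mdeg m \<le> 1"
  shows "m = var_monomial t"
proof (rule poly_mapping_eqI)
  fix l
  have t: "lookup m t = 1"
    using assms in_keys_lookup_le_mdeg[of t m] by (simp add: in_keys_iff)
  show "lookup m l = lookup (var_monomial t) l"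
  proof (cases "l = t")
    case False
    have "lookup m l = 0"
    proof (rule ccontr)
      assume "lookup m l \<noteq> 0"
      then have "lookup m l + lookup m t = (\<Sum>x\<in>{l, t}. lookup m x)" using False by simp
      also have "\<dots> \<le> mdeg m"
        unfolding mdeg_def using \<open>lookup m l \<noteq> 0\<close> assms(1)
        by (intro sum_mono2) (auto simp: in_keys_iff)
      finally have "lookup m l + lookup m t \<le> mdeg m" .
      then show False using \<open>lookup m l \<noteq> 0\<close> t assms(2) by linarith
    qed
    then show ?thesis using False by (simp add: var_monomial_def lookup_single)
  qed (simp add: t var_monomial_def)
qed

lemma tdeg_le:
  "(\<And>m. m \<in> keys p \<Longrightarrow> mdeg m \<le> b) \<Longrightarrow> tdeg p \<le> b"
  by (simp add: tdeg_def mdeg_def)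

section \<open>Weight bounds for polynomials in k\<close>

text \<open>
  A monomial a^m of the coefficient of x^s in G_{k+1} or H_{k+1} uses x_degree m of the s powers
  of x, since a_l comes with x^(l+2). Each remaining power of x raises the degree in k by at most
  two, and each of the mdeg m factors a_l by one more (a sum over its position), which gives
  k_degree_bound m s = 2 (s - x_degree m) + mdeg m.
\<close>

definition x_degree :: "(nat \<Rightarrow>\<^sub>0 nat) \<Rightarrow> nat" where
  "x_degree m = mweight m + 2 * mdeg m"

definition k_degree_bound ::
  "(nat \<Rightarrow>\<^sub>0 nat) \<Rightarrow> nat \<Rightarrow> int" where
  "k_degree_bound m s = 2 * int s - 2 * int (mweight m) - 3 * int (mdeg m)"

lemma x_degree_add: "x_degree (a + b) = x_degree a + x_degree b"
  by (simp add: x_degree_def mdeg_add mweight_add)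

lemma k_degree_bound_add:
  "k_degree_bound (a + b) (s + s') = k_degree_bound a s + k_degree_bound b s'"
  by (simp add: k_degree_bound_def mdeg_add mweight_add)

lemma x_degree_zero [simp]: "x_degree 0 = 0"
  and k_degree_bound_zero [simp]: "k_degree_bound 0 s = 2 * int s"
  and x_degree_var_monomial [simp]: "x_degree (var_monomial t) = t + 2"
  and k_degree_bound_var_monomial [simp]: "k_degree_bound (var_monomial t) s = 2 * int s - 2 * int t - 3"
  by (simp_all add: x_degree_def k_degree_bound_def)

definition weight_bounded ::
  "int \<Rightarrow> nat \<Rightarrow> mpoly poly \<Rightarrow> bool" where
  "weight_bounded c s P \<longleftrightarrow>
     (\<forall>d. \<forall>m\<in>keys (coeff P d). int d + c \<le> k_degree_bound m s \<and> x_degree m \<le> s)"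

lemma weight_boundedI:
  "(\<And>d m. m \<in> keys (coeff P d) \<Longrightarrow> int d + c \<le> k_degree_bound m s \<and> x_degree m \<le> s) \<Longrightarrow>
    weight_bounded c s P"
  by (auto simp: weight_bounded_def)

lemma weight_boundedD:
  "weight_bounded c s P \<Longrightarrow> m \<in> keys (coeff P d) \<Longrightarrow> int d + c \<le> k_degree_bound m s \<and> x_degree m \<le> s"
  by (auto simp: weight_bounded_def)

lemma weight_bounded_zero [simp]: "weight_bounded c s 0"
  by (simp add: weight_bounded_def)

lemma weight_bounded_add:
  "weight_bounded c s P \<Longrightarrow> weight_bounded c s Q \<Longrightarrow> weight_bounded c s (P + Q)"
  unfolding weight_bounded_def using keys_add by fastforce

lemma weight_bounded_uminus: "weight_bounded c s P \<Longrightarrow> weight_bounded c s (- P)"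
  by (simp add: weight_bounded_def in_keys_iff)

lemma weight_bounded_diff:
  "weight_bounded c s P \<Longrightarrow> weight_bounded c s Q \<Longrightarrow> weight_bounded c s (P - Q)"
  using weight_bounded_add[OF _ weight_bounded_uminus] by (simp only: diff_conv_add_uminus)

lemma weight_bounded_sum:
  "(\<And>i. i \<in> A \<Longrightarrow> weight_bounded c s (f i)) \<Longrightarrow> weight_bounded c s (sum f A)"
  by (induction A rule: infinite_finite_induct) (auto intro: weight_bounded_add)

lemma weight_bounded_smult_of_int:
  "weight_bounded c s P \<Longrightarrow> weight_bounded c s (smult (of_int z) P)"
  by (rule weight_boundedI) (auto simp: in_keys_iff lookup_of_int_mult dest: weight_boundedD)

lemma weight_bounded_raise:
  "weight_bounded c s' P \<Longrightarrow> s' \<le> s \<Longrightarrow> weight_bounded (c + 2 * (int s - int s')) s P"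
  unfolding weight_bounded_def k_degree_bound_def by fastforce

lemma weight_bounded_mult:
  assumes "weight_bounded c s P" "weight_bounded c' s' Q"
  shows "weight_bounded (c + c') (s + s') (P * Q)"
proof (rule weight_boundedI)
  fix d m assume m: "m \<in> keys (coeff (P * Q) d)"
  have "keys (coeff (P * Q) d) \<subseteq> (\<Union>i\<in>{..d}. keys (coeff P i * coeff Q (d - i)))"
    unfolding coeff_mult by (rule keys_sum)
  then obtain i where i: "i \<le> d" "m \<in> keys (coeff P i * coeff Q (d - i))"
    using m by blast
  then obtain a b where ab: "m = a + b" "a \<in> keys (coeff P i)" "b \<in> keys (coeff Q (d - i))"
    using keys_mult by blast
  have "int d = int i + int (d - i)" using i(1) by simp
  then show "int d + (c + c') \<le> k_degree_bound m (s + s') \<and> x_degree m \<le> s + s'"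
    using weight_boundedD[OF assms(1) ab(2)] weight_boundedD[OF assms(2) ab(3)]
    unfolding ab(1) k_degree_bound_add x_degree_add by linarith
qed

lemma weight_bounded_const:
  "(\<And>m. m \<in> keys a \<Longrightarrow> c \<le> k_degree_bound m s \<and> x_degree m \<le> s) \<Longrightarrow> weight_bounded c s [:a:]"
  by (rule weight_boundedI) (auto simp: coeff_pCons split: nat.splits)

lemma weight_bounded_pCons_iff:
  "weight_bounded c s (pCons a P) \<longleftrightarrow>
     (\<forall>m\<in>keys a. c \<le> k_degree_bound m s \<and> x_degree m \<le> s) \<and> weight_bounded (c + 1) s P"
proof
  assume h: "weight_bounded c s (pCons a P)"
  show "(\<forall>m\<in>keys a. c \<le> k_degree_bound m s \<and> x_degree m \<le> s) \<and> weight_bounded (c + 1) s P"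
  proof
    show "\<forall>m\<in>keys a. c \<le> k_degree_bound m s \<and> x_degree m \<le> s"
      using weight_boundedD[OF h, of _ 0] by simp
    show "weight_bounded (c + 1) s P"
    proof (rule weight_boundedI)
      fix d m assume "m \<in> keys (coeff P d)"
      then show "int d + (c + 1) \<le> k_degree_bound m s \<and> x_degree m \<le> s"
        using weight_boundedD[OF h, of m "Suc d"] by simp
    qed
  qed
next
  assume h: "(\<forall>m\<in>keys a. c \<le> k_degree_bound m s \<and> x_degree m \<le> s) \<and> weight_bounded (c + 1) s P"
  show "weight_bounded c s (pCons a P)"
  proof (rule weight_boundedI)
    fix d m assume m: "m \<in> keys (coeff (pCons a P) d)"
    show "int d + c \<le> k_degree_bound m s \<and> x_degree m \<le> s"
    proof (cases d)
      case (Suc d')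
      then have "m \<in> keys (coeff P d')" using m by simp
      then show ?thesis using weight_boundedD[of "c + 1" s P m d'] h Suc by simp
    qed (use h m in simp)
  qed
qed

lemma weight_bounded_linear:
  "keys a \<subseteq> {0} \<Longrightarrow> weight_bounded (-1) 0 [:a, 1:]"
  by (auto simp: weight_bounded_pCons_iff intro!: weight_bounded_const)

lemma weight_bounded_pcompose_linear:
  "keys a \<subseteq> {0} \<Longrightarrow> weight_bounded c s P \<Longrightarrow> weight_bounded c s (pcompose P [:a, 1:])"
proof (induction P arbitrary: c)
  case (pCons b P)
  then have "weight_bounded c s [:b:]" "weight_bounded (c + 1) s P"
    by (auto simp: weight_bounded_pCons_iff intro: weight_bounded_const)
  moreover have "weight_bounded (- 1 + (c + 1)) (0 + s) ([:a, 1:] * pcompose P [:a, 1:])"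
    using pCons weight_bounded_linear weight_bounded_mult calculation(2) by blast
  ultimately show ?case
    by (simp add: pcompose_pCons weight_bounded_add)
qed simp

lemma keys_of_nat_mpoly: "keys (of_nat k :: mpoly) \<subseteq> {0}"
  by (simp flip: single_of_nat)

definition lookup_poly ::
  "(nat \<Rightarrow>\<^sub>0 nat) \<Rightarrow> mpoly poly \<Rightarrow> rat poly" where
  "lookup_poly m P = map_poly (\<lambda>c. lookup c m) P"

lemma coeff_lookup_poly: "coeff (lookup_poly m P) d = lookup (coeff P d) m"
  by (simp add: lookup_poly_def coeff_map_poly)

lemma lookup_poly_zero [simp]: "lookup_poly m 0 = 0"
  and lookup_poly_add: "lookup_poly m (P + Q) = lookup_poly m P + lookup_poly m Q"
  and lookup_poly_diff: "lookup_poly m (P - Q) = lookup_poly m P - lookup_poly m Q"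
  and lookup_poly_sum: "lookup_poly m (sum f A) = (\<Sum>i\<in>A. lookup_poly m (f i))"
  and lookup_poly_pCons: "lookup_poly m (pCons a P) = pCons (lookup a m) (lookup_poly m P)"
  and lookup_poly_smult_of_int: "lookup_poly m (smult (of_int z) P) = smult (of_int z) (lookup_poly m P)"
  and lookup_poly_smult_of_nat: "lookup_poly m (smult (of_nat k) P) = smult (of_nat k) (lookup_poly m P)"
  by (auto intro!: poly_eqI simp: coeff_lookup_poly lookup_add lookup_minus coeff_sum lookup_sum
      coeff_pCons lookup_of_int_mult lookup_of_nat_mult split: nat.splits)

lemma lookup_poly_mult_const_zero:
  "lookup_poly 0 (P * [:a:]) = smult (lookup a 0) (lookup_poly 0 P)"
  by (rule poly_eqI) (simp add: coeff_lookup_poly mult.commute[of P] lookup_mult_zero)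

lemma lookup_poly_mult_const_var_monomial:
  "lookup_poly (var_monomial t) (P * [:a:]) =
     smult (lookup a (var_monomial t)) (lookup_poly 0 P) + smult (lookup a 0) (lookup_poly (var_monomial t) P)"
  by (rule poly_eqI) (simp add: coeff_lookup_poly mult.commute[of P] lookup_mult_var_monomial algebra_simps)

lemma lookup_poly_linear_mult:
  "lookup_poly m ([:of_nat a, 1:] * P) = [:of_nat a, 1:] * lookup_poly m P"
  by (rule poly_eqI) (simp add: coeff_lookup_poly coeff_pCons lookup_add lookup_of_nat_mult split: nat.splits)

lemma lookup_poly_pcompose_linear:
  "lookup_poly m (pcompose P [:of_nat a, 1:]) = pcompose (lookup_poly m P) [:of_nat a, 1:]"
  by (induction P)
    (simp_all add: pcompose_pCons lookup_poly_add lookup_poly_smult_of_nat lookup_poly_pCons)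

lemma lookup_poly_pcompose_shift:
  "lookup_poly m (pcompose P [:1, 1:]) = pcompose (lookup_poly m P) [:1, 1:]"
  using lookup_poly_pcompose_linear[of m P 1] by simp

lemma lookup_poly_shift_mult: "lookup_poly m ([:1, 1:] * P) = [:1, 1:] * lookup_poly m P"
  using lookup_poly_linear_mult[of m 1 P] by simp

lemma poly_lookup_poly: "poly (lookup_poly m P) (of_nat j) = lookup (poly P (of_nat j)) m"
  by (induction P) (simp_all add: lookup_poly_pCons lookup_add lookup_of_nat_mult)

lemma lookup_poly_eqI:
  "(\<And>k. poly P (of_nat k) = poly Q (of_nat k)) \<Longrightarrow> lookup_poly m P = lookup_poly m Q"
  by (rule poly_eqI_of_nat) (simp add: poly_lookup_poly)

lemma weight_bounded_coeff_lookup_poly: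
  "weight_bounded c s P \<Longrightarrow> coeff (lookup_poly m P) d \<noteq> 0 \<Longrightarrow> int d + c \<le> k_degree_bound m s"
  using weight_boundedD[of c s P m d] by (simp add: coeff_lookup_poly in_keys_iff)

lemma weight_bounded_degree_lookup_poly:
  "weight_bounded c s P \<Longrightarrow> c \<le> k_degree_bound m s \<Longrightarrow> int (degree (lookup_poly m P)) + c \<le> k_degree_bound m s"
  by (cases "lookup_poly m P = 0") (auto intro: weight_bounded_coeff_lookup_poly)

lemma weight_bounded_lookup_poly_eq_0:
  "weight_bounded c s P \<Longrightarrow> k_degree_bound m s < c \<Longrightarrow> lookup_poly m P = 0"
proof (rule ccontr)
  assume "weight_bounded c s P" "k_degree_bound m s < c" "lookup_poly m P \<noteq> 0"
  then have "int (degree (lookup_poly m P)) + c \<le> k_degree_bound m s"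
    by (intro weight_bounded_coeff_lookup_poly) (use leading_coeff_0_iff in blast)+
  then show False using \<open>k_degree_bound m s < c\<close> by linarith
qed

lemma poly_map_poly_mconst: "poly (map_poly mconst p) (of_nat j) = mconst (poly p (of_nat j))"
  by (induction p) (simp_all add: map_poly_pCons mconst_add mconst_mult mconst_of_nat)

definition power_antidifference :: "nat \<Rightarrow> rat poly" where
  "power_antidifference d =
     (SOME A. degree A \<le> Suc d \<and> poly A 0 = 0 \<and> (\<forall>x. poly A (x + 1) - poly A x = x ^ d))"

lemma power_antidifference:
  "degree (power_antidifference d) \<le> Suc d"
  "poly (power_antidifference d) 0 = 0"
  "poly (power_antidifference d) (x + 1) - poly (power_antidifference d) x = x ^ d"
  using someI_ex[OF exists_antidifference_power[where 'a = rat, of d]]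
  unfolding power_antidifference_def by blast+

definition antidifference :: "mpoly poly \<Rightarrow> mpoly poly" where
  "antidifference R = (\<Sum>d\<le>degree R. smult (coeff R d) (map_poly mconst (power_antidifference d)))"

lemma poly_antidifference:
  "poly (antidifference R) (of_nat j) =
     (\<Sum>d\<le>degree R. coeff R d * mconst (poly (power_antidifference d) (of_nat j)))"
  by (simp add: antidifference_def poly_sum poly_map_poly_mconst)

lemma poly_antidifference_0: "poly (antidifference R) 0 = 0"
  using poly_antidifference[of R 0] by (simp add: power_antidifference)

lemma antidifference_difference:
  "poly (antidifference R) (of_nat (Suc j)) - poly (antidifference R) (of_nat j) = poly R (of_nat j)"
proof -
  have "poly (antidifference R) (of_nat (Suc j)) - poly (antidifference R) (of_nat j) =
      (\<Sum>d\<le>degree R. coeff R d *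
         mconst (poly (power_antidifference d) (of_nat j + 1) - poly (power_antidifference d) (of_nat j)))"
    unfolding poly_antidifference by (simp add: mconst_diff right_diff_distrib sum_subtractf add.commute)
  also have "\<dots> = (\<Sum>d\<le>degree R. coeff R d * of_nat j ^ d)"
    by (simp add: power_antidifference mconst_of_nat flip: of_nat_power)
  also have "\<dots> = poly R (of_nat j)" by (simp add: poly_altdef)
  finally show ?thesis .
qed

lemma weight_bounded_antidifference:
  assumes "weight_bounded 1 s R"
  shows "weight_bounded 0 s (antidifference R)"
proof (rule weight_boundedI)
  fix k m assume m: "m \<in> keys (coeff (antidifference R) k)"
  have "coeff (antidifference R) k = (\<Sum>d\<le>degree R. coeff R d * mconst (coeff (power_antidifference d) k))"
    by (simp add: antidifference_def coeff_sum coeff_map_poly)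
  then have "keys (coeff (antidifference R) k) \<subseteq>
      (\<Union>d\<in>{..degree R}. keys (coeff R d * mconst (coeff (power_antidifference d) k)))"
    by (simp only: keys_sum)
  then obtain d where d: "m \<in> keys (coeff R d * mconst (coeff (power_antidifference d) k))"
    using m by blast
  then have "coeff (power_antidifference d) k \<noteq> 0"
    by (metis mconst_zero mult_zero_right keys_zero empty_iff)
  then have "k \<le> Suc d" using power_antidifference(1)[of d] le_degree le_trans by blast
  moreover have "m \<in> keys (coeff R d)"
    using d lookup_mult_const[of "coeff R d"] unfolding mconst_def in_keys_iff by fastforce
  then have "int d + 1 \<le> k_degree_bound m s \<and> x_degree m \<le> s"
    using weight_boundedD[OF assms] by blast
  ultimately show "int k + 0 \<le> k_degree_bound m s \<and> x_degree m \<le> s" by linarith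
qed

lemma indefinite_sum_weight_bounded:
  fixes f :: "nat \<Rightarrow> mpoly"
  assumes difference: "\<And>j. f (Suc j) - f j = poly R (of_nat j)"
    and "weight_bounded 1 s R" and "weight_bounded 0 s [:f 0:]"
  shows "\<exists>P. (\<forall>j. f j = poly P (of_nat j)) \<and> weight_bounded 0 s P"
proof -
  define P where "P = [:f 0:] + antidifference R"
  have "f j = poly P (of_nat j)" for j
  proof (induction j)
    case 0 then show ?case using poly_antidifference_0 by (simp add: P_def)
  next
    case (Suc j)
    then show ?case
      using difference[of j] antidifference_difference[of R j] by (simp add: P_def algebra_simps)
  qed
  moreover have "weight_bounded 0 s P"
    unfolding P_def using assms(3) weight_bounded_antidifference[OF assms(2)] by (rule weight_bounded_add)
  ultimately show ?thesis by blast
qed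

section \<open>The recurrences for G and H\<close>

lemma fps_inv1_eq:
  assumes "f * g = 1"
  shows "fps_inv1 f = g"
  unfolding fps_inv1_def
proof (rule the_equality)
  fix h assume "f * h = 1"
  then have "g * (f * h) = g" by simp
  then show "h = g" using assms by (simp add: mult.assoc[symmetric] mult.commute)
qed (rule assms)

lemma mult_fps_inv1: assumes "f $ 0 = 1" shows "f * fps_inv1 f = 1"
proof -
  have "f * fps_right_inverse f 1 = 1" by (rule fps_right_inverse) (simp add: assms)
  then show ?thesis using fps_inv1_eq by metis
qed

lemma diff_eq_of_mult_eq:
  assumes "(a::'a::comm_ring_1) * (1 + c) = b * (1 + d)"
  shows "a - b = b * d - c * a"
  using assms by (simp add: algebra_simps)

lemma aser_nth [simp]: "aser $ k = mvar k"
  by (simp add: aser_def)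

lemma Gser_1: "Gser 1 = 1 + aser * fps_X ^ 2"
  using fps_inv1_eq[of 1 1] by (simp add: Gser_def)

lemma Hser_1: "Hser 1 = 1"
  by (simp add: Hser_def)

lemma Gser_difference:
  "Gser (Suc (Suc k)) - Gser (Suc k) =
     Gser (Suc k) * (aser * fps_X ^ 2) - of_nat (Suc k) * fps_X * Gser (Suc (Suc k))"
proof -
  define L :: "mpoly fps" where "L = 1 + of_nat (Suc k) * fps_X"
  have "L * fps_inv1 L = 1"
    unfolding L_def by (rule mult_fps_inv1) (simp flip: fps_of_nat)
  then have "Gser (Suc (Suc k)) * L = Gser (Suc k) * (1 + aser * fps_X ^ 2)"
    by (simp add: Gser_def L_def mult_ac)
  from diff_eq_of_mult_eq[OF this[unfolded L_def]] show ?thesis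
    by (simp add: mult.assoc)
qed

lemma Hser_difference:
  "Hser (Suc (Suc k)) - Hser (Suc k) =
     - (Hser (Suc (Suc k)) * (aser * fps_X ^ 2)) - of_nat (Suc k) * fps_X * Hser (Suc k)"
proof -
  define E :: "mpoly fps" where "E = 1 + aser * fps_X ^ 2"
  have inverse: "E * fps_inv1 E = 1"
    unfolding E_def by (rule mult_fps_inv1) (simp add: fps_X_power_mult_right_nth)
  have "{1 - int (Suc (Suc k)) .. -1} = insert (- int (Suc k)) {1 - int (Suc k) .. -1}"
    by auto
  then have "Hser (Suc (Suc k)) = (1 + of_int (- int (Suc k)) * fps_X) * fps_inv1 E * Hser (Suc k)"
    unfolding Hser_def E_def by (simp add: prod.insert)
  then have "Hser (Suc (Suc k)) * E =
      Hser (Suc k) * (1 + of_int (- int (Suc k)) * fps_X) * (E * fps_inv1 E)"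
    by (simp only: mult_ac)
  then have "Hser (Suc (Suc k)) * E = Hser (Suc k) * (1 + - (of_nat (Suc k) * fps_X))"
    unfolding inverse by (simp add: algebra_simps)
  from diff_eq_of_mult_eq[OF this[unfolded E_def]] show ?thesis
    by (simp add: algebra_simps)
qed

lemma nth_mult_aser_X2: "(F * (aser * fps_X ^ 2)) $ s = (\<Sum>i<s - 1. F $ i * mvar (s - 2 - i))"
proof -
  have "(F * (aser * fps_X ^ 2)) $ s = (if s < 2 then 0 else (F * aser) $ (s - 2))"
    by (simp add: fps_X_power_mult_right_nth flip: mult.assoc)
  moreover have "{..s - 2} = {..<s - 1}" if "2 \<le> s" using that by auto
  ultimately show ?thesis by (simp add: fps_mult_nth atLeast0AtMost)
qed

lemma nth_of_nat_mult_X: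
  "(of_nat j * fps_X * F :: mpoly fps) $ s = (if s = 0 then 0 else of_nat j * F $ (s - 1))"
  by (simp add: mult.assoc fps_X_mult_nth flip: fps_of_nat)

section \<open>Coefficients of x^s as polynomials in k\<close>

definition exp_half_coeff :: "nat \<Rightarrow> rat" where
  "exp_half_coeff r = (- 1) ^ r / (2 ^ r * fact r)"

lemma exp_half_coeff_0 [simp]: "exp_half_coeff 0 = 1"
  by (simp add: exp_half_coeff_def)

lemma exp_half_coeff_Suc: "exp_half_coeff (Suc r) = - exp_half_coeff r / (2 * of_nat (Suc r))"
  by (simp add: exp_half_coeff_def field_simps)

lemma exp_half_coeff_Suc_diff:
  "exp_half_coeff (Suc r) - exp_half_coeff r = of_nat (2 * r + 3) * exp_half_coeff (Suc r)"
  by (simp add: exp_half_coeff_Suc field_simps)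

text \<open>
  F k stands for G_{k+1} (with \<sigma> = 1, \<alpha> = 0, \<beta> = 1) or H_{k+1} (with \<sigma> = -1, \<alpha> = 1,
  \<beta> = 0); composing with [:of_nat \<alpha>, 1:] shifts k by \<alpha>.
\<close>

locale coeff_recurrence =
  fixes F :: "nat \<Rightarrow> mpoly fps" and \<sigma> :: int and \<alpha> \<beta> :: nat
  assumes difference:
      "F (Suc k) - F k =
         of_int \<sigma> * (F (k + \<alpha>) * (aser * fps_X ^ 2)) - of_nat (Suc k) * fps_X * F (k + \<beta>)"
    and start_nth_0: "F 0 $ 0 = 1"
    and weight_bounded_start: "weight_bounded 0 s [:F 0 $ s:]"
begin

definition represents :: "nat \<Rightarrow> mpoly poly \<Rightarrow> bool" where
  "represents s P \<longleftrightarrow> (\<forall>k. F k $ s = poly P (of_nat k))"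

definition coeff_poly :: "nat \<Rightarrow> mpoly poly" where
  "coeff_poly s = (SOME P. represents s P \<and> weight_bounded 0 s P)"

definition step_poly :: "nat \<Rightarrow> mpoly poly" where
  "step_poly s =
     smult (of_int \<sigma>) (\<Sum>i<s - 1. pcompose (coeff_poly i) [:of_nat \<alpha>, 1:] * [:mvar (s - 2 - i):])
     - (if s = 0 then 0 else [:1, 1:] * pcompose (coeff_poly (s - 1)) [:of_nat \<beta>, 1:])"

lemma nth_difference:
  "F (Suc k) $ s - F k $ s =
     of_int \<sigma> * (\<Sum>i<s - 1. F (k + \<alpha>) $ i * mvar (s - 2 - i))
     - (if s = 0 then 0 else of_nat (Suc k) * F (k + \<beta>) $ (s - 1))"
  using arg_cong[OF difference[of k], of "\<lambda>G. G $ s"] nth_of_nat_mult_X[of "Suc k" _ s]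
  by (simp add: nth_mult_aser_X2 del: of_nat_Suc flip: fps_of_int)

lemma difference_step_poly:
  assumes "\<And>i. i < s \<Longrightarrow> represents i (coeff_poly i)"
  shows "F (Suc k) $ s - F k $ s = poly (step_poly s) (of_nat k)"
proof -
  have "F (k + \<gamma>) $ i = poly (pcompose (coeff_poly i) [:of_nat \<gamma>, 1:]) (of_nat k)" if "i < s" for i \<gamma>
    using assms[OF that] by (simp add: represents_def poly_pcompose add.commute)
  then show ?thesis
    unfolding nth_difference step_poly_def
    by (auto simp: poly_sum algebra_simps intro!: sum.cong)
qed

lemma weight_bounded_step_poly:
  assumes "\<And>i. i < s \<Longrightarrow> weight_bounded 0 i (coeff_poly i)"
  shows "weight_bounded 1 s (step_poly s)"
proof -
  have "weight_bounded 1 s (pcompose (coeff_poly i) [:of_nat \<alpha>, 1:] * [:mvar (s - 2 - i):])"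
    if "i < s - 1" for i
  proof -
    have "weight_bounded 1 (s - 2 - i + 2) [:mvar (s - 2 - i):]"
      by (rule weight_bounded_const) simp
    with assms that have "weight_bounded (0 + 1) (i + (s - 2 - i + 2))
        (pcompose (coeff_poly i) [:of_nat \<alpha>, 1:] * [:mvar (s - 2 - i):])"
      by (intro weight_bounded_mult weight_bounded_pcompose_linear keys_of_nat_mpoly) auto
    moreover have "i + (s - 2 - i + 2) = s" using that by simp
    ultimately show ?thesis by (simp only: add_0)
  qed
  moreover have "weight_bounded 1 s ([:1, 1:] * pcompose (coeff_poly (s - 1)) [:of_nat \<beta>, 1:])"
    if "s \<noteq> 0"
  proof -
    have "weight_bounded (- 1 + 0) (0 + (s - 1)) ([:1, 1:] * pcompose (coeff_poly (s - 1)) [:of_nat \<beta>, 1:])"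
      using assms that keys_of_nat_mpoly[of 1] keys_of_nat_mpoly[of \<beta>]
      by (intro weight_bounded_mult weight_bounded_pcompose_linear weight_bounded_linear) auto
    from weight_bounded_raise[OF this, of s] show ?thesis using that by simp
  qed
  ultimately show ?thesis
    unfolding step_poly_def
    by (intro weight_bounded_diff weight_bounded_smult_of_int weight_bounded_sum) auto
qed

lemma coeff_poly_spec: "represents s (coeff_poly s) \<and> weight_bounded 0 s (coeff_poly s)"
proof (induction s rule: less_induct)
  case (less s)
  have "\<exists>P. (\<forall>k. F k $ s = poly P (of_nat k)) \<and> weight_bounded 0 s P"
    using difference_step_poly weight_bounded_step_poly less weight_bounded_start
    by (intro indefinite_sum_weight_bounded[where R = "step_poly s"]) blast+
  then show ?case
    unfolding coeff_poly_def represents_def by (rule someI_ex)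
qed

lemma nth_eq_poly_coeff_poly: "F k $ s = poly (coeff_poly s) (of_nat k)"
  using coeff_poly_spec represents_def by blast

lemma weight_bounded_coeff_poly: "weight_bounded 0 s (coeff_poly s)"
  using coeff_poly_spec by blast

lemma difference_lookup_poly:
  "pcompose (lookup_poly m (coeff_poly s)) [:1, 1:] - lookup_poly m (coeff_poly s) =
     lookup_poly m (step_poly s)"
proof -
  have "poly (pcompose (coeff_poly s) [:1, 1:] - coeff_poly s) (of_nat k) = poly (step_poly s) (of_nat k)"
    for k
    using difference_step_poly[of s k] coeff_poly_spec
    by (simp add: poly_pcompose nth_eq_poly_coeff_poly add.commute)
  then have "lookup_poly m (pcompose (coeff_poly s) [:1, 1:] - coeff_poly s) = lookup_poly m (step_poly s)"
    by (rule lookup_poly_eqI)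
  then show ?thesis by (simp only: lookup_poly_diff lookup_poly_pcompose_shift)
qed

lemma lookup_poly_zero_step_poly:
  "lookup_poly 0 (step_poly s) =
     - (if s = 0 then 0 else [:1, 1:] * pcompose (lookup_poly 0 (coeff_poly (s - 1))) [:of_nat \<beta>, 1:])"
  unfolding step_poly_def
  by (simp only: lookup_poly_diff lookup_poly_smult_of_int lookup_poly_sum lookup_poly_mult_const_zero
      lookup_mvar_zero smult_0_left sum.neutral_const smult_0_right if_distrib[of "lookup_poly 0"]
      lookup_poly_zero lookup_poly_shift_mult lookup_poly_pcompose_linear diff_0)

lemma lookup_poly_var_step_poly:
  "lookup_poly (var_monomial t) (step_poly s) =
     smult (of_int \<sigma>) (if t + 2 \<le> s then pcompose (lookup_poly 0 (coeff_poly (s - 2 - t))) [:of_nat \<alpha>, 1:] else 0)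
     - (if s = 0 then 0
        else [:1, 1:] * pcompose (lookup_poly (var_monomial t) (coeff_poly (s - 1))) [:of_nat \<beta>, 1:])"
  using sum_lookup_mvar_var_monomial[of s t "\<lambda>i. pcompose (lookup_poly 0 (coeff_poly i)) [:of_nat \<alpha>, 1:]"]
  unfolding step_poly_def
  by (simp only: lookup_poly_diff lookup_poly_smult_of_int lookup_poly_sum
      lookup_poly_mult_const_var_monomial lookup_mvar_zero smult_0_left add_0_right
      lookup_poly_pcompose_linear if_distrib[of "lookup_poly (var_monomial t)"]
      lookup_poly_zero lookup_poly_shift_mult)

lemma degree_lookup_poly_zero_le: "degree (lookup_poly 0 (coeff_poly s)) \<le> 2 * s"
  using weight_bounded_degree_lookup_poly[OF weight_bounded_coeff_poly, of 0 s] by simp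

lemma degree_lookup_poly_var_le:
  "t + 2 \<le> s \<Longrightarrow> degree (lookup_poly (var_monomial t) (coeff_poly s)) \<le> 2 * s - 2 * t - 3"
  using weight_bounded_degree_lookup_poly[OF weight_bounded_coeff_poly, of "var_monomial t" s] by simp

lemma lookup_poly_var_eq_0:
  "s \<le> t + 1 \<Longrightarrow> lookup_poly (var_monomial t) (coeff_poly s) = 0"
  using weight_bounded_lookup_poly_eq_0[OF weight_bounded_coeff_poly, of "var_monomial t" s] by simp

lemma coeff_lookup_poly_zero_top: "coeff (lookup_poly 0 (coeff_poly s)) (2 * s) = exp_half_coeff s"
proof (induction s)
  case 0
  show ?case
    using poly_lookup_poly[of 0 "coeff_poly 0" 0] nth_eq_poly_coeff_poly[of 0 0] start_nth_0
    by (simp add: poly_0_coeff_0)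
next
  case (Suc s)
  let ?Q = "pcompose (lookup_poly 0 (coeff_poly s)) [:of_nat \<beta>, 1:]"
  have degree_Q: "degree ?Q \<le> 2 * s"
    by (simp add: degree_pcompose_linear degree_lookup_poly_zero_le)
  have "of_nat (2 * Suc s) * coeff (lookup_poly 0 (coeff_poly (Suc s))) (2 * Suc s) =
      coeff (pcompose (lookup_poly 0 (coeff_poly (Suc s))) [:1, 1:] - lookup_poly 0 (coeff_poly (Suc s)))
        (2 * Suc s - 1)"
    by (rule coeff_pcompose_shift_diff[symmetric]) (use degree_lookup_poly_zero_le[of "Suc s"] in simp_all)
  also have "\<dots> = - coeff ([:1, 1:] * ?Q) (Suc (2 * s))"
    unfolding difference_lookup_poly lookup_poly_zero_step_poly by simp
  also have "\<dots> = - (coeff ?Q (Suc (2 * s)) + coeff ?Q (2 * s))"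
    by (simp only: coeff_linear_mult_Suc)
  also have "coeff ?Q (Suc (2 * s)) = 0"
    using degree_Q by (simp add: coeff_eq_0)
  also have "coeff ?Q (2 * s) = exp_half_coeff s"
    using coeff_pcompose_linear_top[OF degree_lookup_poly_zero_le] Suc.IH by simp
  finally show ?case by (simp add: exp_half_coeff_Suc field_simps)
qed

lemma coeff_shift_lookup_poly_zero_top:
  "coeff (pcompose (lookup_poly 0 (coeff_poly s)) [:c, 1:]) (2 * s) = exp_half_coeff s"
  using coeff_pcompose_linear_top[OF degree_lookup_poly_zero_le] coeff_lookup_poly_zero_top by simp

lemma coeff_lookup_poly_var_top:
  "coeff (lookup_poly (var_monomial t) (coeff_poly (t + 2 + r))) (2 * r + 1) = of_int \<sigma> * exp_half_coeff r"
proof (induction r)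
  case 0
  have "of_nat 1 * coeff (lookup_poly (var_monomial t) (coeff_poly (t + 2))) 1 =
      coeff (pcompose (lookup_poly (var_monomial t) (coeff_poly (t + 2))) [:1, 1:]
        - lookup_poly (var_monomial t) (coeff_poly (t + 2))) (1 - 1)"
    by (rule coeff_pcompose_shift_diff[symmetric]) (use degree_lookup_poly_var_le[of t "t + 2"] in auto)
  also have "\<dots> = of_int \<sigma> * exp_half_coeff 0"
    using lookup_poly_var_eq_0[of "t + 1" t] coeff_shift_lookup_poly_zero_top[of 0]
    by (simp add: difference_lookup_poly lookup_poly_var_step_poly)
  finally show ?case by simp
next
  case (Suc r)
  let ?s = "t + 2 + Suc r"
  let ?Q = "pcompose (lookup_poly (var_monomial t) (coeff_poly (t + 2 + r))) [:of_nat \<beta>, 1:]"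
  have degree_Q: "degree ?Q \<le> 2 * r + 1"
    using degree_lookup_poly_var_le[of t "t + 2 + r"] by (simp add: degree_pcompose_linear)
  have "of_nat (2 * r + 3) * coeff (lookup_poly (var_monomial t) (coeff_poly ?s)) (2 * r + 3) =
      coeff (pcompose (lookup_poly (var_monomial t) (coeff_poly ?s)) [:1, 1:]
        - lookup_poly (var_monomial t) (coeff_poly ?s)) (2 * r + 3 - 1)"
    by (rule coeff_pcompose_shift_diff[symmetric]) (use degree_lookup_poly_var_le[of t ?s] in auto)
  also have "\<dots> = of_int \<sigma> * coeff (pcompose (lookup_poly 0 (coeff_poly (Suc r))) [:of_nat \<alpha>, 1:]) (2 * Suc r)
      - coeff ([:1, 1:] * ?Q) (Suc (2 * r + 1))"
    unfolding difference_lookup_poly lookup_poly_var_step_poly by (simp add: numeral_3_eq_3)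
  also have "\<dots> = of_int \<sigma> * exp_half_coeff (Suc r) - (coeff ?Q (Suc (2 * r + 1)) + coeff ?Q (2 * r + 1))"
    by (simp only: coeff_linear_mult_Suc coeff_shift_lookup_poly_zero_top)
  also have "coeff ?Q (Suc (2 * r + 1)) = 0"
    using degree_Q by (simp add: coeff_eq_0)
  also have "coeff ?Q (2 * r + 1) = of_int \<sigma> * exp_half_coeff r"
    using coeff_pcompose_linear_top[OF degree_lookup_poly_var_le[of t "t + 2 + r"]] Suc.IH by simp
  also have "of_int \<sigma> * exp_half_coeff (Suc r) - (0 + of_int \<sigma> * exp_half_coeff r) =
      of_int \<sigma> * (exp_half_coeff (Suc r) - exp_half_coeff r)"
    by (simp add: algebra_simps)
  also have "\<dots> = of_nat (2 * r + 3) * (of_int \<sigma> * exp_half_coeff (Suc r))"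
    by (simp only: exp_half_coeff_Suc_diff mult_ac)
  finally have "coeff (lookup_poly (var_monomial t) (coeff_poly ?s)) (2 * r + 3) =
      of_int \<sigma> * exp_half_coeff (Suc r)"
    by (rule mult_left_cancel[THEN iffD1, rotated]) simp
  moreover have "2 * Suc r + 1 = 2 * r + 3" by simp
  ultimately show ?case by (simp only:)
qed

end

definition Ecoeff :: "nat \<Rightarrow> mpoly" where
  "Ecoeff l = (1 + aser * fps_X ^ 2) $ l"

lemma Ecoeff_eq: "Ecoeff l = (if l = 0 then 1 else if l = 1 then 0 else mvar (l - 2))"
  by (simp add: Ecoeff_def fps_X_power_mult_right_nth)

lemma weight_bounded_Ecoeff: "weight_bounded 0 l [:Ecoeff l:]"
  unfolding Ecoeff_eq by (rule weight_bounded_const) (auto split: if_splits)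

lemma lookup_Ecoeff_zero: "lookup (Ecoeff l) 0 = (if l = 0 then 1 else 0)"
  by (simp add: Ecoeff_eq)

lemma lookup_Ecoeff_var_monomial:
  "lookup (Ecoeff l) (var_monomial t) = (if l = t + 2 then 1 else 0)"
  by (auto simp: Ecoeff_eq lookup_mvar_var_monomial lookup_one)

interpretation G: coeff_recurrence "\<lambda>k. Gser (Suc k)" 1 0 1
proof
  show "Gser (Suc (Suc k)) - Gser (Suc k) =
      of_int 1 * (Gser (Suc (k + 0)) * (aser * fps_X ^ 2)) - of_nat (Suc k) * fps_X * Gser (Suc (k + 1))"
    for k using Gser_difference by simp
  show "Gser (Suc 0) $ 0 = 1" "weight_bounded 0 s [:Gser (Suc 0) $ s:]" for s
    using weight_bounded_Ecoeff[of s] Ecoeff_eq[of 0]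
    by (simp_all only: One_nat_def[symmetric] Gser_1 Ecoeff_def) simp
qed

interpretation H: coeff_recurrence "\<lambda>k. Hser (Suc k)" "- 1" 1 0
proof
  show "Hser (Suc (Suc k)) - Hser (Suc k) =
      of_int (- 1) * (Hser (Suc (k + 1)) * (aser * fps_X ^ 2)) - of_nat (Suc k) * fps_X * Hser (Suc (k + 0))"
    for k using Hser_difference by simp
  show "Hser (Suc 0) $ 0 = 1" "weight_bounded 0 s [:Hser (Suc 0) $ s:]" for s
    by (auto simp: Hser_1[unfolded One_nat_def] intro!: weight_bounded_const)
qed

section \<open>The coefficient of x^(n-1)\<close>

definition coeffGH_poly :: "nat \<Rightarrow> mpoly poly" where
  "coeffGH_poly n =
     (\<Sum>i=0..n - 1. (G.coeff_poly (i + 2) - H.coeff_poly (i + 2)) * [:Ecoeff (n - 1 - i):])"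

lemma coeffGH_eq_poly: "coeffGH n (Suc k) = poly (coeffGH_poly n) (of_nat k)"
proof -
  have "coeffGH n (Suc k) =
      (\<Sum>i=0..n - 1. (Gser (Suc k) $ (i + 2) - Hser (Suc k) $ (i + 2)) * Ecoeff (n - 1 - i))"
    by (simp only: coeffGH_def fps_mult_nth fps_shift_nth fps_sub_nth Ecoeff_def)
  then show ?thesis
    by (simp only: coeffGH_poly_def poly_sum poly_mult poly_diff poly_pCons poly_0 mult_zero_right mult_zero_left
        add_0_right G.nth_eq_poly_coeff_poly
        H.nth_eq_poly_coeff_poly mult.commute)
qed

lemma weight_bounded_coeffGH_poly:
  "1 \<le> n \<Longrightarrow> weight_bounded 0 (n + 1) (coeffGH_poly n)"
  unfolding coeffGH_poly_def
proof (rule weight_bounded_sum)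
  fix i assume "1 \<le> n" "i \<in> {0..n - 1}"
  then have "weight_bounded (0 + 0) (i + 2 + (n - 1 - i))
      ((G.coeff_poly (i + 2) - H.coeff_poly (i + 2)) * [:Ecoeff (n - 1 - i):])"
    by (intro weight_bounded_mult weight_bounded_diff G.weight_bounded_coeff_poly
        H.weight_bounded_coeff_poly weight_bounded_Ecoeff)
  moreover have "i + 2 + (n - 1 - i) = n + 1" using \<open>1 \<le> n\<close> \<open>i \<in> {0..n - 1}\<close> by auto
  ultimately show "weight_bounded 0 (n + 1)
      ((G.coeff_poly (i + 2) - H.coeff_poly (i + 2)) * [:Ecoeff (n - 1 - i):])"
    by simp
qed

lemma lookup_poly_var_coeffGH_poly:
  assumes "1 \<le> n"
  shows "lookup_poly (var_monomial t) (coeffGH_poly n) =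
    (if t + 3 \<le> n then lookup_poly 0 (G.coeff_poly (n - 1 - t) - H.coeff_poly (n - 1 - t)) else 0)
    + lookup_poly (var_monomial t) (G.coeff_poly (n + 1) - H.coeff_poly (n + 1))"
proof -
  define D where "D i = G.coeff_poly (i + 2) - H.coeff_poly (i + 2)" for i
  have "lookup_poly (var_monomial t) (coeffGH_poly n) =
      (\<Sum>i=0..n - 1. (if t + 3 \<le> n \<and> i = n - 3 - t then lookup_poly 0 (D i) else 0)
        + (if i = n - 1 then lookup_poly (var_monomial t) (D i) else 0))"
    unfolding coeffGH_poly_def lookup_poly_sum lookup_poly_mult_const_var_monomial D_def[symmetric]
    by (intro sum.cong) (auto simp: lookup_Ecoeff_var_monomial lookup_Ecoeff_zero)
  also have "\<dots> = (if t + 3 \<le> n then lookup_poly 0 (D (n - 3 - t)) else 0)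
      + lookup_poly (var_monomial t) (D (n - 1))"
    by (cases "t + 3 \<le> n") (simp_all add: sum.distrib)
  finally show ?thesis
    using assms by (simp add: D_def numeral_3_eq_3 Suc_diff_Suc)
qed

lemma coeff_lookup_poly_coeffGH_poly_top:
  assumes "1 \<le> i" "i \<le> n - 1"
  shows "coeff (lookup_poly (var_monomial (n - i - 1)) (coeffGH_poly n)) (2 * i + 1) = 2 * exp_half_coeff i"
proof -
  let ?t = "n - i - 1"
  have "coeff (lookup_poly 0 (G.coeff_poly i - H.coeff_poly i)) (2 * i + 1) = 0"
    using G.degree_lookup_poly_zero_le[of i] H.degree_lookup_poly_zero_le[of i]
    by (simp add: lookup_poly_diff coeff_eq_0)
  moreover have "n + 1 = ?t + 2 + i" "n - 1 - ?t = i" using assms by auto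
  ultimately show ?thesis
    using assms G.coeff_lookup_poly_var_top[of ?t i] H.coeff_lookup_poly_var_top[of ?t i]
    by (simp add: lookup_poly_var_coeffGH_poly lookup_poly_diff)
qed

definition S_lookup_poly ::
  "nat \<Rightarrow> (nat \<Rightarrow> mpoly) \<Rightarrow> (nat \<Rightarrow>\<^sub>0 nat) \<Rightarrow> rat poly" where
  "S_lookup_poly n S m = (\<Sum>k\<le>n. monom (lookup (if k = 0 then mvar (n - 1) + S 0 else S k) m) k)"

lemma coeff_S_lookup_poly:
  "1 \<le> k \<Longrightarrow> k \<le> n \<Longrightarrow> coeff (S_lookup_poly n S m) k = lookup (S k) m"
  by (simp add: S_lookup_poly_def coeff_sum coeff_monom)

lemma poly_S_lookup_poly:
  "poly (S_lookup_poly n S m) x =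
     lookup (mvar (n - 1) + S 0) m + (\<Sum>i=1..n. lookup (S i) m * x ^ i)"
proof -
  have "poly (S_lookup_poly n S m) x =
      (\<Sum>k=0..n. lookup (if k = 0 then mvar (n - 1) + S 0 else S k) m * x ^ k)"
    by (simp add: S_lookup_poly_def poly_sum poly_monom atLeast0AtMost)
  also have "\<dots> = lookup (mvar (n - 1) + S 0) m + (\<Sum>i=1..n. lookup (S i) m * x ^ i)"
    by (subst sum.atLeast_Suc_atMost) (auto intro!: sum.cong)
  finally show ?thesis .
qed

lemma lookup_poly_coeffGH_poly:
  assumes "is_S n S"
  shows "lookup_poly m (coeffGH_poly n) = uv_poly (S_lookup_poly n S m)"
proof (rule poly_eqI_of_nat)
  fix j :: nat
  have u: "(of_int (2 * int (Suc j) - 1) :: mpoly) = of_int (1 + 2 * int j)"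
    and v: "(of_int (int (Suc j) * (int (Suc j) - 1)) :: mpoly) = of_int (int j + int j ^ 2)"
    by (simp_all add: algebra_simps power2_eq_square)
  have "poly (lookup_poly m (coeffGH_poly n)) (of_nat j) = lookup (coeffGH n (Suc j)) m"
    by (simp add: poly_lookup_poly coeffGH_eq_poly)
  also have "\<dots> = lookup (of_int (1 + 2 * int j) *
      (mvar (n - 1) + S 0 + (\<Sum>i=1..n. S i * of_int (int j + int j ^ 2) ^ i))) m"
    using assms by (simp only: is_S_def u v)
  also have "\<dots> = of_int (1 + 2 * int j) *
      (lookup (mvar (n - 1) + S 0) m + (\<Sum>i=1..n. lookup (S i) m * of_int (int j + int j ^ 2) ^ i))"
    by (simp only: lookup_of_int_mult lookup_add lookup_sum lookup_mult_of_int of_int_power[symmetric])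
  also have "\<dots> = poly (uv_poly (S_lookup_poly n S m)) (of_nat j)"
    by (simp add: poly_uv_poly poly_S_lookup_poly)
  finally show "poly (lookup_poly m (coeffGH_poly n)) (of_nat j) =
      poly (uv_poly (S_lookup_poly n S m)) (of_nat j)" .
qed

lemma is_S_monomial_bound:
  assumes "is_S n S" "1 \<le> n" "1 \<le> k" "k \<le> n" "m \<in> keys (S k)"
  shows "int (2 * k + 1) \<le> k_degree_bound m (n + 1) \<and> x_degree m \<le> n + 1"
proof -
  let ?P = "lookup_poly m (coeffGH_poly n)"
  have "coeff (S_lookup_poly n S m) k \<noteq> 0"
    using assms by (simp add: coeff_S_lookup_poly in_keys_iff)
  then have "2 * k + 1 \<le> degree ?P"
    unfolding lookup_poly_coeffGH_poly[OF assms(1)] by (rule degree_uv_poly_ge)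
  moreover have "coeff ?P (degree ?P) \<noteq> 0"
    using calculation leading_coeff_0_iff by fastforce
  then have "m \<in> keys (coeff (coeffGH_poly n) (degree ?P))"
    by (simp add: coeff_lookup_poly in_keys_iff)
  ultimately show ?thesis
    using weight_boundedD[OF weight_bounded_coeffGH_poly[OF assms(2)]] by fastforce
qed

lemma is_S_lookup_var_monomial:
  assumes "is_S n S" "1 \<le> i" "i \<le> n - 1"
  shows "lookup (S i) (var_monomial (n - i - 1)) = exp_half_coeff i"
proof -
  let ?t = "n - i - 1"
  let ?P = "lookup_poly (var_monomial ?t) (coeffGH_poly n)"
  have "k_degree_bound (var_monomial ?t) (n + 1) = int (2 * i + 1)"
    using assms(2,3) by (simp add: of_nat_diff)
  moreover have "1 \<le> n" using assms by simp
  ultimately have "int (degree ?P) \<le> int (2 * i + 1)"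
    using weight_bounded_degree_lookup_poly[OF weight_bounded_coeffGH_poly, of n "var_monomial ?t"]
    by simp
  then have "degree ?P \<le> 2 * i + 1" by linarith
  then have "coeff ?P (2 * i + 1) = 2 * coeff (S_lookup_poly n S (var_monomial ?t)) i"
    unfolding lookup_poly_coeffGH_poly[OF assms(1)] by (rule coeff_uv_poly_top)
  also have "\<dots> = 2 * lookup (S i) (var_monomial ?t)"
    using assms by (simp add: coeff_S_lookup_poly)
  finally have "coeff ?P (2 * i + 1) = 2 * lookup (S i) (var_monomial ?t)" .
  then show ?thesis
    using coeff_lookup_poly_coeffGH_poly_top[OF assms(2,3)] by simp
qed

context
  fixes m :: "nat \<Rightarrow>\<^sub>0 nat" and i n :: nat
  assumes k_degree_le: "int (2 * i + 1) \<le> k_degree_bound m (n + 1)"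
    and x_degree_le: "x_degree m \<le> n + 1"
begin

lemma degree_bounds_linear: "2 * int i + 2 * int (mweight m) + 3 * int (mdeg m) \<le> 2 * int n + 1"
  using k_degree_le by (simp add: k_degree_bound_def)

lemma in_keys_less_of_degree_bounds:
  assumes "l \<in> keys m"
  shows "l < n - i"
proof -
  have "l \<le> mweight m" "1 \<le> mdeg m"
    using assms in_keys_le_mweight[of l m] in_keys_lookup_le_mdeg[of l m] by (auto simp: in_keys_iff)
  then show ?thesis using degree_bounds_linear by linarith
qed

lemma mdeg_le_of_degree_bounds: "mdeg m \<le> min ((2 * (n - i) + 1) div 3) ((n + 1) div 2)"
proof -
  have "3 * mdeg m \<le> 2 * (n - i) + 1"
    using degree_bounds_linear by linarith
  moreover have "2 * mdeg m \<le> n + 1"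
    using x_degree_le unfolding x_degree_def by linarith
  ultimately show ?thesis by (simp add: less_eq_div_iff_mult_less_eq mult.commute)
qed

lemma eq_var_monomial_of_degree_bounds:
  assumes "n - i - 1 \<in> keys m"
  shows "m = var_monomial (n - i - 1)"
proof (rule mdeg_le_one_eq_var_monomial[OF assms])
  have "n - i - 1 \<le> mweight m" using assms by (rule in_keys_le_mweight)
  moreover have "n - i - 1 < n - i" using in_keys_less_of_degree_bounds[OF assms] by linarith
  ultimately show "mdeg m \<le> 1" using degree_bounds_linear by linarith
qed

end

theorem proposition4p3:
  fixes n i :: nat and S :: "nat \<Rightarrow> mpoly"
  assumes "is_S n S" and "n \<ge> 2" and "1 \<le> i" and "i \<le> n - 1"
  shows "mvars (S i) \<subseteq> {..<n - i}
    \<and> tdeg (S i) \<le> min ((2 * (n - i) + 1) div 3) ((n + 1) div 2)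
    \<and> (\<exists>F. mvars F \<subseteq> {..<n - i - 1} \<and>
           S i = F + mconst ((-1) ^ i / (2 ^ i * fact i)) * mvar (n - i - 1))"
proof -
  have bounds: "int (2 * i + 1) \<le> k_degree_bound m (n + 1)" "x_degree m \<le> n + 1"
    if "m \<in> keys (S i)" for m
    using is_S_monomial_bound[OF assms(1) _ assms(3) _ that] assms(2,4) by simp_all
  define t where "t = n - i - 1"
  define F where "F = S i - single (var_monomial t) (lookup (S i) (var_monomial t))"
  have "l < t" if "m \<in> keys F" "l \<in> keys m" for m l
  proof -
    have m: "m \<in> keys (S i)" "m \<noteq> var_monomial t"
      using that(1) by (auto simp: F_def keys_diff_single_lookup)
    then have "l < n - i" using that(2) bounds in_keys_less_of_degree_bounds by blast
    moreover have "l \<noteq> t" using m that(2) bounds eq_var_monomial_of_degree_bounds t_def by blast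
    ultimately show ?thesis unfolding t_def by arith
  qed
  then have "mvars F \<subseteq> {..<n - i - 1}" by (auto simp: mvars_def t_def)
  moreover have "S i = F + mconst ((-1) ^ i / (2 ^ i * fact i)) * mvar (n - i - 1)"
    using is_S_lookup_var_monomial[OF assms(1,3,4)]
    by (simp add: F_def t_def mconst_def mvar_def var_monomial_def mult_single exp_half_coeff_def)
  moreover have "l < n - i" if "m \<in> keys (S i)" "l \<in> keys m" for m l
    using bounds[OF that(1)] that(2) by (rule in_keys_less_of_degree_bounds)
  then have "mvars (S i) \<subseteq> {..<n - i}" by (auto simp: mvars_def)
  moreover have "tdeg (S i) \<le> min ((2 * (n - i) + 1) div 3) ((n + 1) div 2)"
    using bounds by (intro tdeg_le mdeg_le_of_degree_bounds)
  ultimately show ?thesis by blast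
qed

end
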